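(* Let $a>0$ and $f\in\mathcal C_a$. Then $\mathrm{Sh}_0(f):\mathbb R\to\mathbb R$ satisfies: $\mathrm{Sh}_0(f)(x)=f(x)$ for all $x\le-a$; $\mathrm{Sh}_0(f)(2x+f(x))=f(x)$ for all $x\in(-a,0)$; and $\mathrm{Sh}_0(f)(x)=x$ for all $x\ge f(0)$.
   Context: $\mathcal C_a$ is the set of $C^1$ functions $f:\mathbb R\to\mathbb R$ that are even, satisfy $f(s)=|s|$ for $|s|\ge a$ and are strictly convex on $[-a,a]$. For $f\in\mathcal C_a$ and $\alpha\in[0,1)$: $F_\alpha(s)=f(s)-\alpha s$, $x_\alpha^+=(f')^{-1}(\alpha)\in[0,a)$ (inverse of $f':[-a,a]\to[-1,1]$); let $F_\alpha^{-1}$ be the inverse of $F_\alpha|_{[x_\alpha^+,\infty)}$, $\phi=F_\alpha^{-1}\circ F_\alpha$, $\delta_x=(1-\alpha)^{-1}F_\alpha(x)-\phi(x)$, $s_\alpha=x_\alpha^++\delta_{x_\alpha^+}$; $x\mapsto x+\delta_x$ is an increasing bijection $(-\infty,x_\alpha^+]\to(-\infty,s_\alpha]$ with inverse $\tau$. Define $\mathrm{Sh}_\alpha(f)(x)=\alpha x+F_\alpha(\tau(x))$ for $x\le s_\alpha$ and $=x$ for $x>s_\alpha$. *)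

theory Defs
  imports "HOL-Analysis.Analysis"
begin

definition strictly_convex_on :: "real set \<Rightarrow> (real \<Rightarrow> real) \<Rightarrow> bool" where
  "strictly_convex_on S f \<longleftrightarrow>
     (\<forall>x\<in>S. \<forall>y\<in>S. \<forall>t. x \<noteq> y \<and> 0 < t \<and> t < 1 \<longrightarrow>
        f (t * x + (1 - t) * y) < t * f x + (1 - t) * f y)"

definition Ca :: "real \<Rightarrow> (real \<Rightarrow> real) set" where
  "Ca a = {f. f C1_differentiable_on UNIV \<and> (\<forall>s. f (- s) = f s)
             \<and> (\<forall>s. \<bar>s\<bar> \<ge> a \<longrightarrow> f s = \<bar>s\<bar>)
             \<and> strictly_convex_on {-a..a} f}"

definition Fal :: "real \<Rightarrow> (real \<Rightarrow> real) \<Rightarrow> real \<Rightarrow> real" where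
  "Fal \<alpha> f s = f s - \<alpha> * s"

definition xplus :: "real \<Rightarrow> real \<Rightarrow> (real \<Rightarrow> real) \<Rightarrow> real" where
  "xplus a \<alpha> f = (THE x. x \<in> {-a..a} \<and> deriv f x = \<alpha>)"

definition Finv :: "real \<Rightarrow> real \<Rightarrow> (real \<Rightarrow> real) \<Rightarrow> real \<Rightarrow> real" where
  "Finv a \<alpha> f y = (THE s. s \<ge> xplus a \<alpha> f \<and> Fal \<alpha> f s = y)"

definition phi :: "real \<Rightarrow> real \<Rightarrow> (real \<Rightarrow> real) \<Rightarrow> real \<Rightarrow> real" where
  "phi a \<alpha> f x = Finv a \<alpha> f (Fal \<alpha> f x)"

definition delta :: "real \<Rightarrow> real \<Rightarrow> (real \<Rightarrow> real) \<Rightarrow> real \<Rightarrow> real" where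
  "delta a \<alpha> f x = Fal \<alpha> f x / (1 - \<alpha>) - phi a \<alpha> f x"

definition salpha :: "real \<Rightarrow> real \<Rightarrow> (real \<Rightarrow> real) \<Rightarrow> real" where
  "salpha a \<alpha> f = xplus a \<alpha> f + delta a \<alpha> f (xplus a \<alpha> f)"

definition tau :: "real \<Rightarrow> real \<Rightarrow> (real \<Rightarrow> real) \<Rightarrow> real \<Rightarrow> real" where
  "tau a \<alpha> f y = (THE x. x \<le> xplus a \<alpha> f \<and> x + delta a \<alpha> f x = y)"

definition Sh :: "real \<Rightarrow> real \<Rightarrow> (real \<Rightarrow> real) \<Rightarrow> real \<Rightarrow> real" where
  "Sh a \<alpha> f x = (if x \<le> salpha a \<alpha> f then \<alpha> * x + Fal \<alpha> f (tau a \<alpha> f x) else x)"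

end

theory Submission
  imports Defs
begin

text \<open>
  For \<open>\<alpha> = 0\<close> everything is explicit: \<open>x\<^sub>0\<^sup>+ = 0\<close>, \<open>\<phi>(x) = |x|\<close>,
  \<open>\<delta>\<^sub>x = f(x) - |x|\<close> and \<open>s\<^sub>0 = f(0)\<close>, so on \<open>(-\<infinity>, 0]\<close> the map
  \<open>x \<mapsto> x + \<delta>\<^sub>x\<close> is \<open>x \<mapsto> 2x + f(x)\<close>, and below \<open>f(0)\<close> the function \<open>Sh\<^sub>0(f)\<close> is
  \<open>f\<close> composed with the inverse of this map. What has to be shown is that the inverses
  defining \<open>\<phi>\<close> and \<open>\<tau>\<close> exist. Strict convexity makes
  \<open>f'\<close> strictly increasing on \<open>[-a, a]\<close>; \<open>f'\<close> is odd and equals \<open>-1\<close> on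
  \<open>(-\<infinity>, -a]\<close> (at \<open>-a\<close> by continuity of \<open>f'\<close>). Hence \<open>f' > 0\<close> on \<open>(0, \<infinity>)\<close> and
  \<open>f' \<ge> -1\<close> on \<open>(-\<infinity>, 0]\<close>, so \<open>f\<close> is injective on \<open>[0, \<infinity>)\<close> and \<open>2x + f(x)\<close> is
  strictly increasing on \<open>(-\<infinity>, 0]\<close>.
\<close>

lemma strictly_convex_on_subset:
  "strictly_convex_on T f \<Longrightarrow> S \<subseteq> T \<Longrightarrow> strictly_convex_on S f"
  unfolding strictly_convex_on_def by blast

lemma strictly_convex_onD:
  assumes "strictly_convex_on S f" "x \<in> S" "y \<in> S" "x \<noteq> y" "0 < t" "t < 1"
  shows "f (t * x + (1 - t) * y) < t * f x + (1 - t) * f y"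
  using assms unfolding strictly_convex_on_def by blast

lemma strictly_convex_on_slope_less:
  assumes f: "strictly_convex_on S f" and "x \<in> S" "y \<in> S" "x < t" "t < y"
  shows "(f t - f x) / (t - x) < (f y - f x) / (y - x)"
    and "(f y - f x) / (y - x) < (f y - f t) / (y - t)"
proof -
  define v where "v = (t - x) / (y - x)"
  define m where "m = (f y - f x) / (y - x)"
  have "0 < t - x" "0 < y - t" "0 < y - x"
    using \<open>x < t\<close> \<open>t < y\<close> by auto
  then have v: "0 < v" "v < 1"
    by (simp_all add: v_def field_simps)
  have "(1 - v) * x + (1 - (1 - v)) * y = x + v * (y - x)"
    by (simp add: algebra_simps)
  also have "\<dots> = t"
    using \<open>0 < y - x\<close> by (simp add: v_def)
  finally have t: "(1 - v) * x + (1 - (1 - v)) * y = t" .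
  have "f ((1 - v) * x + (1 - (1 - v)) * y) < (1 - v) * f x + (1 - (1 - v)) * f y"
    by (rule strictly_convex_onD[OF f \<open>x \<in> S\<close> \<open>y \<in> S\<close>]) (use v \<open>0 < y - x\<close> in auto)
  then have "f t < (1 - v) * f x + (1 - (1 - v)) * f y"
    by (simp only: t)
  moreover have "(1 - v) * f x + (1 - (1 - v)) * f y = f x + v * (f y - f x)"
    by (simp add: algebra_simps)
  moreover have "v * (f y - f x) = m * (t - x)"
    by (simp add: v_def m_def)
  moreover have "m * (t - x) + m * (y - t) = m * (y - x)"
    by (simp add: algebra_simps)
  moreover have "m * (y - x) = f y - f x"
    using \<open>0 < y - x\<close> by (simp add: m_def)
  ultimately have "f t - f x < m * (t - x)" and "m * (y - t) < f y - f t"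
    by linarith+
  then show "(f t - f x) / (t - x) < (f y - f x) / (y - x)"
    and "(f y - f x) / (y - x) < (f y - f t) / (y - t)"
    using \<open>0 < t - x\<close> \<open>0 < y - t\<close>
    by (simp_all add: m_def pos_divide_less_eq pos_less_divide_eq)
qed

lemma strictly_convex_on_Icc_DERIV_less_slope:
  assumes f: "strictly_convex_on {x..y} f" and "x < y" and "DERIV f x :> D"
  shows "D < (f y - f x) / (y - x)"
proof -
  define z where "z = (x + y) / 2"
  have z: "x < z" "z < y"
    using \<open>x < y\<close> by (auto simp: z_def)
  have "((\<lambda>t. (f t - f x) / (t - x)) \<longlongrightarrow> D) (at_right x)"
    using has_field_derivative_at_within[OF \<open>DERIV f x :> D\<close>]
    by (simp add: has_field_derivative_iff)
  moreover have "\<forall>\<^sub>F t in at_right x. (f t - f x) / (t - x) \<le> (f z - f x) / (z - x)"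
    using eventually_at_right_real[OF \<open>x < z\<close>]
  proof eventually_elim
    case (elim t)
    then show ?case
      using strictly_convex_on_slope_less(1)[OF f, of x z t] z by auto
  qed
  ultimately have "D \<le> (f z - f x) / (z - x)"
    by (rule tendsto_upperbound) simp
  also have "\<dots> < (f y - f x) / (y - x)"
    using strictly_convex_on_slope_less(1)[OF f, of x y z] z by auto
  finally show ?thesis .
qed

lemma strictly_convex_on_Icc_slope_less_DERIV:
  assumes f: "strictly_convex_on {x..y} f" and "x < y" and "DERIV f y :> D"
  shows "(f y - f x) / (y - x) < D"
proof -
  define z where "z = (x + y) / 2"
  have z: "x < z" "z < y"
    using \<open>x < y\<close> by (auto simp: z_def)
  have "(f y - f x) / (y - x) < (f y - f z) / (y - z)"
    using strictly_convex_on_slope_less(2)[OF f, of x y z] z by auto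
  also have "\<dots> \<le> D"
  proof (rule tendsto_lowerbound)
    show "((\<lambda>t. (f t - f y) / (t - y)) \<longlongrightarrow> D) (at_left y)"
      using has_field_derivative_at_within[OF \<open>DERIV f y :> D\<close>]
      by (simp add: has_field_derivative_iff)
    show "\<forall>\<^sub>F t in at_left y. (f y - f z) / (y - z) \<le> (f t - f y) / (t - y)"
      using eventually_at_left_real[OF \<open>z < y\<close>]
    proof eventually_elim
      case (elim t)
      then have "(f y - f z) / (y - z) < (f y - f t) / (y - t)"
        using strictly_convex_on_slope_less(2)[OF f, of z y t] z by auto
      also have "(f y - f t) / (y - t) = (f t - f y) / (t - y)"
        by (metis minus_diff_eq minus_divide_divide)
      finally show ?case by simp
    qed
  qed simp
  finally show ?thesis .
qed

lemma strictly_convex_on_DERIV_less: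
  assumes "strictly_convex_on S f" and "{x..y} \<subseteq> S" and "x < y"
    and "DERIV f x :> Dx" and "DERIV f y :> Dy"
  shows "Dx < Dy"
proof -
  have f: "strictly_convex_on {x..y} f"
    using strictly_convex_on_subset assms(1,2) .
  show ?thesis
    using strictly_convex_on_Icc_DERIV_less_slope[OF f assms(3,4)]
      strictly_convex_on_Icc_slope_less_DERIV[OF f assms(3,5)] by linarith
qed

lemma DERIV_pos_imp_strict_mono_on:
  fixes f :: "real \<Rightarrow> real"
  assumes "connected S" and "\<And>x. DERIV f x :> f' x" and "\<And>x. x \<in> interior S \<Longrightarrow> 0 < f' x"
  shows "strict_mono_on S f"
proof (rule strict_mono_onI)
  fix r s assume "r \<in> S" "s \<in> S" "r < s"
  then have "{r..s} \<subseteq> S"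
    using connected_contains_Icc[OF \<open>connected S\<close>] by blast
  then have interior: "{r<..<s} \<subseteq> interior S"
    by (intro interior_maximal) auto
  have "\<exists>D. DERIV f x :> D \<and> 0 < D" if "r < x" "x < s" for x
    using interior that by (intro exI[of _ "f' x"] conjI assms(2) assms(3)) auto
  moreover have "continuous_on {r..s} f"
    using assms(2) by (intro continuous_at_imp_continuous_on) (blast intro: DERIV_isCont)
  ultimately show "f r < f s"
    by (rule DERIV_pos_imp_increasing_open[OF \<open>r < s\<close>])
qed

lemma DERIV_minus_of_even:
  fixes f :: "real \<Rightarrow> real"
  assumes "\<And>s. f (- s) = f s" and "DERIV f x :> D"
  shows "DERIV f (- x) :> - D"
proof -
  have "(\<lambda>s. f (- s)) = f"
    using assms(1) by simp
  then show ?thesis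
    using DERIV_mirror[where f=f and x=x and y="- D"] assms(2) by simp
qed

lemma Fal_0 [simp]: "Fal 0 f = f"
  by (simp add: Fal_def fun_eq_iff)

locale Ca_function =
  fixes a :: real and f :: "real \<Rightarrow> real"
  assumes a_pos: "0 < a" and f_in_Ca: "f \<in> Ca a"
begin

lemma f_minus: "f (- s) = f s"
  and f_eq_abs: "a \<le> \<bar>s\<bar> \<Longrightarrow> f s = \<bar>s\<bar>"
  and strictly_convex: "strictly_convex_on {-a..a} f"
  and C1: "f C1_differentiable_on UNIV"
  using f_in_Ca by (auto simp: Ca_def)

lemma DERIV_deriv: "DERIV f x :> deriv f x"
  using C1 by (simp add: C1_differentiable_on_eq DERIV_deriv_iff_real_differentiable)

lemma continuous_deriv: "continuous_on UNIV (deriv f)"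
proof -
  have "vector_derivative f (at x) = deriv f x" for x
    using DERIV_deriv by (simp add: has_real_derivative_iff_has_vector_derivative vector_derivative_at)
  then show ?thesis
    using C1 by (simp add: C1_differentiable_on_eq)
qed

lemma deriv_minus: "deriv f (- x) = - deriv f x"
  using DERIV_minus_of_even[OF f_minus DERIV_deriv] DERIV_deriv DERIV_unique by blast

lemma deriv_0: "deriv f 0 = 0"
  using deriv_minus[of 0] by simp

lemma deriv_eq_minus_one:
  assumes "x \<le> -a"
  shows "deriv f x = -1"
proof -
  have "deriv f y = -1" if "y < -a" for y
  proof -
    have "DERIV f y :> -1"
      by (rule has_field_derivative_transform_within_open[of uminus _ y "{..< -a}"])
        (use that a_pos f_eq_abs in \<open>auto intro!: derivative_eq_intros\<close>)
    then show ?thesis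
      using DERIV_deriv DERIV_unique by blast
  qed
  then have "{..< -a} \<subseteq> {y \<in> UNIV. deriv f y = -1}"
    by auto
  moreover have "closed {y \<in> UNIV. deriv f y = -1}"
    using continuous_closed_preimage_constant[OF continuous_deriv] by simp
  ultimately have "{.. -a} \<subseteq> {y \<in> UNIV. deriv f y = -1}"
    by (metis closure_lessThan closure_minimal)
  then show ?thesis
    using assms by auto
qed

lemma deriv_strict_mono:
  assumes "-a \<le> x" "x < y" "y \<le> a"
  shows "deriv f x < deriv f y"
  using strictly_convex_on_DERIV_less[OF strictly_convex _ \<open>x < y\<close> DERIV_deriv DERIV_deriv] assms
  by auto

lemma deriv_pos:
  assumes "0 < x"
  shows "0 < deriv f x"
proof (cases "x \<le> a")
  case True
  then show ?thesis
    using deriv_strict_mono[of 0 x] deriv_0 a_pos assms by auto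
next
  case False
  then show ?thesis
    using deriv_eq_minus_one[of "- x"] deriv_minus[of x] by auto
qed

lemma deriv_ge_minus_one:
  assumes "x \<le> 0"
  shows "-1 \<le> deriv f x"
proof (cases "x \<le> -a")
  case True
  then show ?thesis
    using deriv_eq_minus_one by simp
next
  case False
  then show ?thesis
    using deriv_strict_mono[of "-a" x] deriv_eq_minus_one[of "-a"] a_pos assms by auto
qed

lemma deriv_eq_0_iff:
  assumes "x \<in> {-a..a}"
  shows "deriv f x = 0 \<longleftrightarrow> x = 0"
  using deriv_strict_mono[of x 0] deriv_strict_mono[of 0 x] deriv_0 assms
  by (cases x "0::real" rule: linorder_cases) auto

lemma f_strict_mono_on_nonneg: "strict_mono_on {0..} f"
  by (rule DERIV_pos_imp_strict_mono_on[OF _ DERIV_deriv]) (auto intro: deriv_pos)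

lemma double_plus_f_strict_mono_on_nonpos: "strict_mono_on {..0} (\<lambda>x. 2 * x + f x)"
proof (rule DERIV_pos_imp_strict_mono_on)
  show "DERIV (\<lambda>x. 2 * x + f x) x :> 2 + deriv f x" for x
    by (auto intro!: derivative_eq_intros DERIV_deriv)
  show "0 < 2 + deriv f x" if "x \<in> interior {..0}" for x
    using deriv_ge_minus_one[of x] that by simp
qed simp

lemma xplus_0: "xplus a 0 f = 0"
  unfolding xplus_def by (rule the_equality) (use a_pos deriv_eq_0_iff in auto)

lemma phi_0: "phi a 0 f x = \<bar>x\<bar>"
  unfolding phi_def Finv_def xplus_0 Fal_0
proof (rule the_equality)
  show "0 \<le> \<bar>x\<bar> \<and> f \<bar>x\<bar> = f x"
    using f_minus[of x] by (cases "0 \<le> x") auto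
  show "s = \<bar>x\<bar>" if "0 \<le> s \<and> f s = f x" for s
    using strict_mono_on_eqD[OF f_strict_mono_on_nonneg, of "\<bar>x\<bar>" s] f_minus[of x] that
    by (cases "0 \<le> x") auto
qed

lemma salpha_0: "salpha a 0 f = f 0"
  by (simp add: salpha_def delta_def xplus_0 phi_0)

lemma tau_0:
  assumes "x \<le> 0"
  shows "tau a 0 f (2 * x + f x) = x"
  unfolding tau_def xplus_0 delta_def phi_0 Fal_0
proof (rule the_equality)
  show "x \<le> 0 \<and> x + (f x / (1 - 0) - \<bar>x\<bar>) = 2 * x + f x"
    using assms by simp
  show "y = x" if "y \<le> 0 \<and> y + (f y / (1 - 0) - \<bar>y\<bar>) = 2 * x + f x" for y
    using strict_mono_on_eqD[OF double_plus_f_strict_mono_on_nonpos, of y x] assms that by auto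
qed

lemma Sh_0_graph:
  assumes "x \<le> 0"
  shows "Sh a 0 f (2 * x + f x) = f x"
proof -
  have "2 * x + f x \<le> 2 * 0 + f 0"
    using strict_mono_on_leD[OF double_plus_f_strict_mono_on_nonpos, of x 0] assms by simp
  then show ?thesis
    by (simp add: Sh_def salpha_0 tau_0 assms)
qed

lemma Sh_0_left:
  assumes "x \<le> -a"
  shows "Sh a 0 f x = f x"
proof -
  have "x \<le> 0" and "2 * x + f x = x"
    using f_eq_abs[of x] assms a_pos by auto
  then show ?thesis
    using Sh_0_graph by metis
qed

lemma Sh_0_right:
  assumes "f 0 \<le> y"
  shows "Sh a 0 f y = y"
proof (cases "y = f 0")
  case True
  then show ?thesis
    using Sh_0_graph[of 0] by simp
next
  case False
  then show ?thesis
    using assms by (simp add: Sh_def salpha_0)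
qed

end

theorem corollary3p19:
  fixes a :: real and f :: "real \<Rightarrow> real"
  assumes "a > 0" and "f \<in> Ca a"
  shows "(\<forall>x. x \<le> -a \<longrightarrow> Sh a 0 f x = f x)
       \<and> (\<forall>x. -a < x \<and> x < 0 \<longrightarrow> Sh a 0 f (2 * x + f x) = f x)
       \<and> (\<forall>x. x \<ge> f 0 \<longrightarrow> Sh a 0 f x = x)"
proof -
  interpret Ca_function a f
    using assms by unfold_locales
  show ?thesis
    using Sh_0_left Sh_0_graph Sh_0_right by auto
qed

end
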